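(* Let $T$ be a string and $T'$ be obtained from $T$ by a single character edit (insertion, substitution, or deletion) at position $i$. Then every string $x\in \mathcal{N}_1\cup\mathcal{N}_3^{\neg\mathrm{v}}$ occurs in $T$ (i.e. $x\in\mathrm{Substr}(T)$).
   Context: Strings are over an alphabet $\Sigma$; $\mathrm{Substr}(T)$, $\mathrm{Prefix}(T)$, $\mathrm{Suffix}(T)$ are the sets of substrings, prefixes, suffixes of $T$. A string $w\in\mathrm{Substr}(T)$ is left-maximal in $T$ if $w\in\mathrm{Prefix}(T)$ or there exist distinct $a,b\in\Sigma$ with $aw,bw\in\mathrm{Substr}(T)$; right-maximal if $w\in\mathrm{Suffix}(T)$ or there exist distinct $a,b$ with $wa,wb\in\mathrm{Substr}(T)$. $\mathsf{LeftM}(T)$, $\mathsf{RightM}(T)$ denote these sets and $\mathsf{M}(T)=\mathsf{LeftM}(T)\cap\mathsf{RightM}(T)$. Edit setting: $|T|=n$. Insertion: $|T'|=n+1$, $T'[1..i-1]=T[1..i-1]$, $T'[i]$ is the inserted character, $T'[i+1..n+1]=T[i..n]$. Substitution: $|T'|=n$, $T'[i]\ne T[i]$, $T'[j]=T[j]$ for $j\neq i$. Deletion: $T'=T[1..i-1]T[i+1..n]$ (position $i$ of $T'$ is the edited position). A crossing occurrence of a nonempty string $x$ is an occurrence $T'[j..k]=x$ such that, for insertion/substitution, $k=i-1$, or $j\le i\le k$, or $j=i+1$; and for deletion, $k=i-1$, or ($j\le i-1$ and $i\le k$), or $j=i$. $x$ is of Type (v) if (1) $x$ has at least two crossing occurrences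 in $T'$, and (2) if all occurrences of $x$ in $T'$ are crossing occurrences then $x\in\mathsf{M}(T')$. Let $\mathcal{N}=(\mathsf{M}(T')\setminus\mathsf{M}(T))\setminus\{T'\}$, $\mathcal{N}_1=\mathcal{N}\cap\mathsf{RightM}(T)$, $\mathcal{N}_2=\mathcal{N}\cap\mathsf{LeftM}(T)$, $\mathcal{N}_3=\mathcal{N}\setminus(\mathcal{N}_1\cup\mathcal{N}_2)$. Let $\mathcal{N}_3^{\mathrm{v}}$ be the set of $x\in\mathcal{N}_3$ such that $x$ is of Type (v) and every character $a$ with $xa\in\mathrm{Substr}(T')$ is the character immediately following some crossing occurrence of $x$ in $T'$; let $\mathcal{N}_3^{\neg\mathrm{v}}=\mathcal{N}_3\setminus\mathcal{N}_3^{\mathrm{v}}$. *)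

theory Defs
  imports Main
begin

(* Strings are lists over an alphabet 'a; positions are 1-based as in the paper:
   T[p] = T ! (p - 1). *)

definition Substr :: "'a list \<Rightarrow> 'a list set" where
  "Substr T = {x. \<exists>u v. T = u @ x @ v}"

definition Prefix :: "'a list \<Rightarrow> 'a list set" where
  "Prefix T = {x. \<exists>v. T = x @ v}"

definition Suffix :: "'a list \<Rightarrow> 'a list set" where
  "Suffix T = {x. \<exists>u. T = u @ x}"

definition LeftM :: "'a list \<Rightarrow> 'a list set" where
  "LeftM T = {w \<in> Substr T. w \<in> Prefix T \<or>
      (\<exists>a b. a \<noteq> b \<and> a # w \<in> Substr T \<and> b # w \<in> Substr T)}"

definition RightM :: "'a list \<Rightarrow> 'a list set" where
  "RightM T = {w \<in> Substr T. w \<in> Suffix T \<or>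
      (\<exists>a b. a \<noteq> b \<and> w @ [a] \<in> Substr T \<and> w @ [b] \<in> Substr T)}"

definition MaxRep :: "'a list \<Rightarrow> 'a list set" where
  "MaxRep T = LeftM T \<inter> RightM T"

datatype edit_kind = Insertion | Substitution | Deletion

definition single_edit :: "edit_kind \<Rightarrow> 'a list \<Rightarrow> 'a list \<Rightarrow> nat \<Rightarrow> bool" where
  "single_edit k T T' i = (case k of
     Insertion \<Rightarrow> 1 \<le> i \<and> i \<le> length T + 1 \<and> length T' = length T + 1 \<and>
                  take (i - 1) T' = take (i - 1) T \<and> drop i T' = drop (i - 1) T
   | Substitution \<Rightarrow> 1 \<le> i \<and> i \<le> length T \<and> length T' = length T \<and>
                  T' ! (i - 1) \<noteq> T ! (i - 1) \<and>
                  (\<forall>j. 1 \<le> j \<and> j \<le> length T \<and> j \<noteq> i \<longrightarrow> T' ! (j - 1) = T ! (j - 1))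
   | Deletion \<Rightarrow> 1 \<le> i \<and> i \<le> length T \<and> T' = take (i - 1) T @ drop i T)"

definition occ_at :: "'a list \<Rightarrow> 'a list \<Rightarrow> nat \<Rightarrow> bool" where
  "occ_at T' x j = (1 \<le> j \<and> j + length x - 1 \<le> length T' \<and>
                     take (length x) (drop (j - 1) T') = x)"

definition crossing_occ :: "edit_kind \<Rightarrow> 'a list \<Rightarrow> nat \<Rightarrow> 'a list \<Rightarrow> nat \<Rightarrow> bool" where
  "crossing_occ ed T' i x j = (x \<noteq> [] \<and> occ_at T' x j \<and>
     (let k = j + length x - 1 in
      if ed = Deletion then k = i - 1 \<or> (j \<le> i - 1 \<and> i \<le> k) \<or> j = i
      else k = i - 1 \<or> (j \<le> i \<and> i \<le> k) \<or> j = i + 1))"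

definition typeV :: "edit_kind \<Rightarrow> 'a list \<Rightarrow> nat \<Rightarrow> 'a list \<Rightarrow> bool" where
  "typeV ed T' i x = ((\<exists>j1 j2. j1 \<noteq> j2 \<and> crossing_occ ed T' i x j1 \<and> crossing_occ ed T' i x j2) \<and>
     ((\<forall>j. occ_at T' x j \<longrightarrow> crossing_occ ed T' i x j) \<longrightarrow> x \<in> MaxRep T'))"

definition NewM :: "'a list \<Rightarrow> 'a list \<Rightarrow> 'a list set" where
  "NewM T T' = (MaxRep T' - MaxRep T) - {T'}"

definition N1 :: "'a list \<Rightarrow> 'a list \<Rightarrow> 'a list set" where
  "N1 T T' = NewM T T' \<inter> RightM T"

definition N2 :: "'a list \<Rightarrow> 'a list \<Rightarrow> 'a list set" where
  "N2 T T' = NewM T T' \<inter> LeftM T"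

definition N3 :: "'a list \<Rightarrow> 'a list \<Rightarrow> 'a list set" where
  "N3 T T' = NewM T T' - (N1 T T' \<union> N2 T T')"

(* the character immediately following the crossing occurrence starting at j is
   T'[j+|x|] = T' ! (j + |x| - 1) *)
definition N3v :: "edit_kind \<Rightarrow> 'a list \<Rightarrow> 'a list \<Rightarrow> nat \<Rightarrow> 'a list set" where
  "N3v ed T T' i = {x \<in> N3 T T'. typeV ed T' i x \<and>
     (\<forall>a. x @ [a] \<in> Substr T' \<longrightarrow>
        (\<exists>j. crossing_occ ed T' i x j \<and> j + length x \<le> length T' \<and>
             T' ! (j + length x - 1) = a))}"

definition N3nv :: "edit_kind \<Rightarrow> 'a list \<Rightarrow> 'a list \<Rightarrow> nat \<Rightarrow> 'a list set" where
  "N3nv ed T T' i = N3 T T' - N3v ed T T' i"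

end

theory Submission
  imports Defs
begin

(* Members of N1 are right-maximal in T and so occur in T. Suppose x does not occur
   in T. The parts of T' before and after the edited position are substrings of T, so
   every occurrence of x in T' is crossing. If moreover x is in N3, it is a maximal
   repeat of T' other than T' itself and hence occurs at least twice; with all
   occurrences crossing, x is of Type (v) and each right extension of x follows a
   crossing occurrence, i.e. x lies in N3v rather than N3nv. *)

lemma occ_at_iff: "occ_at T x j \<longleftrightarrow> (\<exists>u v. T = u @ x @ v \<and> j = Suc (length u))"
proof
  assume occ: "occ_at T x j"
  let ?u = "take (j - 1) T" and ?v = "drop (j - 1 + length x) T"
  have "drop (j - 1) T = x @ ?v"
    using occ by (metis occ_at_def append_take_drop_id drop_drop add.commute)
  then have "T = ?u @ x @ ?v"
    by (metis append_take_drop_id)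
  moreover have "j = Suc (length ?u)"
    using occ by (auto simp: occ_at_def)
  ultimately show "\<exists>u v. T = u @ x @ v \<and> j = Suc (length u)"
    by blast
qed (auto simp: occ_at_def)

lemma Substr_trans: "x \<in> Substr y \<Longrightarrow> y \<in> Substr T \<Longrightarrow> x \<in> Substr T"
  unfolding Substr_def by (auto, metis append.assoc)

lemma take_in_Substr: "take m T \<in> Substr T"
  unfolding Substr_def by (intro CollectI exI[of _ "[]"] exI[of _ "drop m T"]) simp

lemma drop_in_Substr: "drop m T \<in> Substr T"
  unfolding Substr_def by (intro CollectI exI[of _ "take m T"] exI[of _ "[]"]) simp

lemma RightM_subset_Substr: "RightM T \<subseteq> Substr T"
  by (auto simp: RightM_def)

lemma snoc_in_Substr_occ_at:
  assumes "x @ [a] \<in> Substr T"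
  obtains j where "occ_at T x j" "j + length x \<le> length T" "T ! (j + length x - 1) = a"
proof -
  obtain u v where T: "T = u @ x @ a # v"
    using assms by (auto simp: Substr_def)
  then have "occ_at T x (Suc (length u))"
    by (auto simp: occ_at_iff)
  moreover have "Suc (length u) + length x \<le> length T" "T ! (Suc (length u) + length x - 1) = a"
    using T by (simp_all add: nth_append)
  ultimately show thesis
    using that by blast
qed

lemma Cons_in_Substr_occ_at:
  assumes "a # x \<in> Substr T"
  obtains j where "occ_at T x (Suc (Suc j))" "T ! j = a"
proof -
  obtain u v where T: "T = u @ a # x @ v"
    using assms by (auto simp: Substr_def)
  then have "occ_at T x (Suc (Suc (length u)))"
    unfolding occ_at_iff by (metis append.assoc append_Cons append_Nil length_append_singleton)
  moreover have "T ! length u = a"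
    using T by (simp add: nth_append)
  ultimately show thesis
    using that by blast
qed

lemma MaxRep_two_occ_at:
  assumes "x \<in> MaxRep T" "x \<noteq> T"
  shows "\<exists>j1 j2. j1 \<noteq> j2 \<and> occ_at T x j1 \<and> occ_at T x j2"
proof -
  consider (right) a b where "a \<noteq> b" "x @ [a] \<in> Substr T" "x @ [b] \<in> Substr T"
    | (left) a b where "a \<noteq> b" "a # x \<in> Substr T" "b # x \<in> Substr T"
    | (border) "x \<in> Prefix T" "x \<in> Suffix T"
    using assms(1) by (auto simp: MaxRep_def LeftM_def RightM_def)
  then show ?thesis
  proof cases
    case right
    obtain j1 where j1: "occ_at T x j1" "j1 + length x \<le> length T" "T ! (j1 + length x - 1) = a"
      using right(2) by (rule snoc_in_Substr_occ_at)
    obtain j2 where j2: "occ_at T x j2" "j2 + length x \<le> length T" "T ! (j2 + length x - 1) = b"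
      using right(3) by (rule snoc_in_Substr_occ_at)
    from j1 j2 right(1) show ?thesis
      by metis
  next
    case left
    obtain j1 where j1: "occ_at T x (Suc (Suc j1))" "T ! j1 = a"
      using left(2) by (rule Cons_in_Substr_occ_at)
    obtain j2 where j2: "occ_at T x (Suc (Suc j2))" "T ! j2 = b"
      using left(3) by (rule Cons_in_Substr_occ_at)
    from j1 j2 left(1) show ?thesis
      by (metis Suc_inject)
  next
    case border
    then obtain u v where prefix: "T = x @ v" and suffix: "T = u @ x"
      unfolding Prefix_def Suffix_def by blast
    have "occ_at T x 1"
      unfolding occ_at_iff using prefix by force
    moreover have "occ_at T x (Suc (length u))"
      unfolding occ_at_iff using suffix by force
    moreover have "u \<noteq> []"
      using suffix assms(2) by auto
    ultimately show ?thesis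
      by (metis One_nat_def Suc_inject length_0_conv)
  qed
qed

lemma single_edit_unchanged_parts_in_Substr:
  assumes "single_edit ed T T' i"
  shows "take (i - 1) T' \<in> Substr T" "drop i T' \<in> Substr T"
proof -
  have "take (i - 1) T' \<in> Substr T \<and> drop i T' \<in> Substr T"
  proof (cases ed)
    case Insertion
    with assms show ?thesis
      by (auto simp: single_edit_def take_in_Substr drop_in_Substr)
  next
    case Deletion
    with assms have "take (i - 1) T' = take (i - 1) T" "drop i T' = drop 1 (drop i T)"
      by (auto simp: single_edit_def min_def)
    then show ?thesis
      by (metis take_in_Substr drop_in_Substr Substr_trans)
  next
    case Substitution
    with assms have len: "1 \<le> i" "length T' = length T"
      and same: "\<forall>j. 1 \<le> j \<and> j \<le> length T \<and> j \<noteq> i \<longrightarrow> T' ! (j - 1) = T ! (j - 1)"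
      by (auto simp: single_edit_def)
    have same_nth: "T' ! p = T ! p" if "p < length T" "p \<noteq> i - 1" for p
      using same[rule_format, of "Suc p"] that len(1) by auto
    have "take (i - 1) T' = take (i - 1) T" "drop i T' = drop i T"
      by (rule nth_equalityI; use len same_nth in auto)+
    then show ?thesis
      by (metis take_in_Substr drop_in_Substr)
  qed
  then show "take (i - 1) T' \<in> Substr T" "drop i T' \<in> Substr T"
    by auto
qed

lemma non_crossing_occ_in_Substr:
  assumes edit: "single_edit ed T T' i"
    and "occ_at T' x j" "\<not> crossing_occ ed T' i x j"
  shows "x \<in> Substr T"
proof -
  obtain u v where T': "T' = u @ x @ v" "j = Suc (length u)"
    using assms(2) occ_at_iff by metis
  have "1 \<le> i"
    using edit by (cases ed) (auto simp: single_edit_def)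
  with assms(2,3) T' have "length u + length x \<le> i - 1 \<or> i \<le> length u"
    by (cases "ed = Deletion") (auto simp: crossing_occ_def Let_def)
  then show ?thesis
  proof
    assume "length u + length x \<le> i - 1"
    then have "take (i - 1) T' = u @ x @ take (i - 1 - length u - length x) v"
      using T' by simp
    then have "x \<in> Substr (take (i - 1) T')"
      unfolding Substr_def by blast
    then show ?thesis
      using single_edit_unchanged_parts_in_Substr(1)[OF edit] Substr_trans by blast
  next
    assume "i \<le> length u"
    then have "drop i T' = drop i u @ x @ v"
      using T' by simp
    then have "x \<in> Substr (drop i T')"
      unfolding Substr_def by blast
    then show ?thesis
      using single_edit_unchanged_parts_in_Substr(2)[OF edit] Substr_trans by blast
  qed
qed

lemma N3_all_occ_crossing_imp_N3v:
  assumes "x \<in> N3 T T'" and crossing: "\<And>j. occ_at T' x j \<Longrightarrow> crossing_occ ed T' i x j"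
  shows "x \<in> N3v ed T T' i"
proof -
  have maxrep: "x \<in> MaxRep T'" "x \<noteq> T'"
    using assms(1) by (auto simp: N3_def NewM_def)
  then have "typeV ed T' i x"
    using MaxRep_two_occ_at crossing unfolding typeV_def by blast
  moreover have "\<exists>j. crossing_occ ed T' i x j \<and> j + length x \<le> length T' \<and>
                     T' ! (j + length x - 1) = a" if extension: "x @ [a] \<in> Substr T'" for a
  proof -
    obtain j where "occ_at T' x j" "j + length x \<le> length T'" "T' ! (j + length x - 1) = a"
      using extension by (rule snoc_in_Substr_occ_at)
    with crossing show ?thesis
      by blast
  qed
  ultimately show ?thesis
    using assms(1) by (auto simp: N3v_def)
qed

theorem lemma1:
  fixes T T' x :: "'a list" and i :: nat and ed :: edit_kind
  assumes "single_edit ed T T' i"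
    and "x \<in> N1 T T' \<union> N3nv ed T T' i"
  shows "x \<in> Substr T"
proof (rule ccontr)
  assume x_new: "x \<notin> Substr T"
  then have crossing: "\<And>j. occ_at T' x j \<Longrightarrow> crossing_occ ed T' i x j"
    using non_crossing_occ_in_Substr[OF assms(1)] by blast
  from x_new have "x \<notin> N1 T T'"
    using RightM_subset_Substr by (auto simp: N1_def)
  with assms(2) have "x \<in> N3 T T'" "x \<notin> N3v ed T T' i"
    by (auto simp: N3nv_def)
  with crossing show False
    using N3_all_occ_crossing_imp_N3v by blast
qed

end
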